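(* Let $C$ be an $(n,\alpha,v,\rho)$-FR code. Define $g'(\ell)$ for $\ell=1,\dots,v$ recursively by $$g'(1)=\rho,\qquad g'(\ell+1)=g'(\ell)+\rho-\left\lceil\frac{\alpha\,g'(\ell)-\ell\rho}{v-\ell}\right\rceil\quad(\ell=1,\dots,v-1).$$ Then for all $k=1,2,\dots,n$, $$M_k(C)\le\sum_{i=1}^{v}\mathbb I\big(k>n-g'(i)\big),$$ where $\mathbb I(P)$ equals $1$ if $P$ holds and $0$ otherwise.
   Context: An incidence structure is a triple $(\mathcal P,\mathcal B,\mathcal I)$ with $\mathcal P$ (points) and $\mathcal B$ (blocks) finite sets and $\mathcal I\subseteq \mathcal P\times\mathcal B$; repeated blocks are allowed. An $(n,\alpha,v,\rho)$-FR code is an incidence structure with $|\mathcal B|=n$, $|\mathcal P|=v$, every point incident with exactly $\rho$ blocks and every block incident with exactly $\alpha$ points. The supported file size is $M_k(C)=\min_{\mathcal K\subseteq\mathcal B,|\mathcal K|=k}|\{p\in\mathcal P:\exists B\in\mathcal K,(p,B)\in\mathcal I\}|$, the minimum number of distinct points incident with some block of a $k$-set of blocks. *)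

theory Defs
  imports Complex_Main
begin

text \<open>An incidence structure (P, B, I): finite point set, finite block set (blocks are
  labels, so repeated point-sets are allowed), incidence relation I \<subseteq> P \<times> B.\<close>
definition incidence_structure :: "'p set \<Rightarrow> 'b set \<Rightarrow> ('p \<times> 'b) set \<Rightarrow> bool" where
  "incidence_structure P B I \<longleftrightarrow> finite P \<and> finite B \<and> I \<subseteq> P \<times> B"

definition FR_code :: "nat \<Rightarrow> nat \<Rightarrow> nat \<Rightarrow> nat \<Rightarrow> 'p set \<Rightarrow> 'b set \<Rightarrow> ('p \<times> 'b) set \<Rightarrow> bool" where
  "FR_code n \<alpha> v \<rho> P B I \<longleftrightarrow> incidence_structure P B I \<and> card B = n \<and> card P = v \<and>
     (\<forall>p\<in>P. card {b\<in>B. (p, b) \<in> I} = \<rho>) \<and>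
     (\<forall>b\<in>B. card {p\<in>P. (p, b) \<in> I} = \<alpha>)"

definition covered :: "'p set \<Rightarrow> ('p \<times> 'b) set \<Rightarrow> 'b set \<Rightarrow> 'p set" where
  "covered P I K = {p\<in>P. \<exists>b\<in>K. (p, b) \<in> I}"

definition file_size :: "'p set \<Rightarrow> 'b set \<Rightarrow> ('p \<times> 'b) set \<Rightarrow> nat \<Rightarrow> nat" where
  "file_size P B I k = Min ((\<lambda>K. card (covered P I K)) ` {K. K \<subseteq> B \<and> card K = k})"

text \<open>The recursion g'(1) = rho, g'(l+1) = g'(l) + rho - ceil((alpha g'(l) - l rho)/(v - l)).
  The value at 0 is an irrelevant dummy.\<close>
fun gprime :: "nat \<Rightarrow> nat \<Rightarrow> nat \<Rightarrow> nat \<Rightarrow> int" where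
  "gprime \<alpha> v \<rho> 0 = 0"
| "gprime \<alpha> v \<rho> (Suc 0) = int \<rho>"
| "gprime \<alpha> v \<rho> (Suc (Suc l)) =
     gprime \<alpha> v \<rho> (Suc l) + int \<rho> -
     \<lceil>(real \<alpha> * real_of_int (gprime \<alpha> v \<rho> (Suc l)) - real (Suc l) * real \<rho>)
        / (real v - real (Suc l))\<rceil>"

end

theory Submission
  imports Defs
begin

text \<open>Greedily build point sets \<open>S\<^sub>1 \<subset> S\<^sub>2 \<subset> \<dots>\<close> with \<open>|S\<^sub>l| = l\<close> meeting at most \<open>g'(l)\<close>
  blocks: the \<open>v - l\<close> points outside \<open>S\<^sub>l\<close> together have \<open>\<alpha> u - l \<rho>\<close> incidences with the
  \<open>u\<close> blocks already met, so one of them has at least the average number of these and adds at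
  most \<open>\<rho>\<close> minus that many new blocks. If \<open>g'(l) \<le> n - k\<close>, then \<open>k\<close> blocks avoiding all blocks
  met by \<open>S\<^sub>l\<close> cover at most \<open>v - l\<close> points; taking the largest such \<open>l\<close>, all larger indices
  \<open>i\<close> satisfy \<open>k > n - g'(i)\<close>.\<close>

lemma sum_card_filter_swap:
  assumes "finite X" "finite Y"
  shows "(\<Sum>x\<in>X. card {y\<in>Y. R x y}) = (\<Sum>y\<in>Y. card {x\<in>X. R x y})"
proof -
  have card_eq: "card {z\<in>Z. Q z} = (\<Sum>z\<in>Z. of_bool (Q z))" if "finite Z" for Z and Q :: "_ \<Rightarrow> bool"
    using that by (simp add: Collect_conj_eq Int_commute)
  show ?thesis
    by (simp only: card_eq[OF assms(1)] card_eq[OF assms(2)] sum.swap[of _ X Y])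
qed

lemma exists_ceiling_average_le:
  fixes f :: "'a \<Rightarrow> nat"
  assumes "finite R" "R \<noteq> {}"
  shows "\<exists>p\<in>R. \<lceil>real (\<Sum>x\<in>R. f x) / real (card R)\<rceil> \<le> int (f p)"
proof (rule ccontr)
  assume "\<not> ?thesis"
  then have "\<And>p. p \<in> R \<Longrightarrow> real (f p) < real (\<Sum>x\<in>R. f x) / real (card R)"
    by (auto simp: not_le less_ceiling_iff)
  then have "(\<Sum>x\<in>R. real (f x)) < real (card R) * (real (\<Sum>x\<in>R. f x) / real (card R))"
    using assms by (intro sum_bounded_above_strict) (auto simp: card_gt_0_iff)
  then show False
    using assms by simp
qed

lemma ceiling_divide_increment_le:
  fixes a d c :: real and y z :: int
  assumes "0 \<le> a" "a \<le> d" "y \<le> z"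
  shows "\<lceil>(a * of_int z - c) / d\<rceil> \<le> \<lceil>(a * of_int y - c) / d\<rceil> + (z - y)"
proof -
  have "a * of_int (z - y) \<le> d * of_int (z - y)"
    using assms by (intro mult_right_mono) auto
  then have "a * of_int (z - y) / d \<le> of_int (z - y)"
    using assms by (cases "d = 0") (auto simp: divide_le_eq mult.commute)
  moreover have "(a * of_int z - c) / d = (a * of_int y - c) / d + a * of_int (z - y) / d"
    by (simp add: add_divide_distrib[symmetric] algebra_simps)
  ultimately have "(a * of_int z - c) / d \<le> (a * of_int y - c) / d + of_int (z - y)"
    by linarith
  then show ?thesis
    by (metis ceiling_add_of_int ceiling_mono)
qed

lemma FR_codeD:
  assumes "FR_code n \<alpha> v \<rho> P B I"
  shows "finite P" "finite B" "card B = n" "card P = v"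
    and "\<And>p. p \<in> P \<Longrightarrow> card {b\<in>B. (p, b) \<in> I} = \<rho>"
    and "\<And>b. b \<in> B \<Longrightarrow> card {p\<in>P. (p, b) \<in> I} = \<alpha>"
  using assms unfolding FR_code_def incidence_structure_def by auto

lemma FR_code_count_incidences:
  assumes "FR_code n \<alpha> v \<rho> P B I"
  shows "\<alpha> * n = v * \<rho>"
proof -
  note FR = FR_codeD[OF assms]
  have "v * \<rho> = (\<Sum>p\<in>P. card {b\<in>B. (p, b) \<in> I})"
    using FR by simp
  also have "\<dots> = (\<Sum>b\<in>B. card {p\<in>P. (p, b) \<in> I})"
    using FR by (intro sum_card_filter_swap)
  also have "\<dots> = \<alpha> * n"
    using FR by simp
  finally show ?thesis ..
qed

definition incident_blocks :: "'b set \<Rightarrow> ('p \<times> 'b) set \<Rightarrow> 'p set \<Rightarrow> 'b set" where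
  "incident_blocks B I S = {b\<in>B. \<exists>p\<in>S. (p, b) \<in> I}"

lemma incident_blocks_subset: "incident_blocks B I S \<subseteq> B"
  unfolding incident_blocks_def by auto

lemma FR_code_count_incidences_incident_blocks:
  assumes FR: "FR_code n \<alpha> v \<rho> P B I" and "S \<subseteq> P"
  defines "U \<equiv> incident_blocks B I S"
  shows "(\<Sum>p\<in>P - S. card {b\<in>U. (p, b) \<in> I}) + card S * \<rho> = \<alpha> * card U"
proof -
  note FR = FR_codeD[OF FR]
  have finU: "finite U"
    using finite_subset[OF incident_blocks_subset FR(2)] unfolding U_def .
  have "(\<Sum>p\<in>S. card {b\<in>U. (p, b) \<in> I}) = card S * \<rho>"
  proof -
    have "{b\<in>U. (p, b) \<in> I} = {b\<in>B. (p, b) \<in> I}" if "p \<in> S" for p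
      using that unfolding U_def incident_blocks_def by auto
    then have "(\<Sum>p\<in>S. card {b\<in>U. (p, b) \<in> I}) = (\<Sum>p\<in>S. \<rho>)"
      using FR(5) \<open>S \<subseteq> P\<close> by (intro sum.cong) auto
    then show ?thesis
      by simp
  qed
  moreover have "(\<Sum>p\<in>P - S. card {b\<in>U. (p, b) \<in> I}) + (\<Sum>p\<in>S. card {b\<in>U. (p, b) \<in> I})
      = (\<Sum>p\<in>P. card {b\<in>U. (p, b) \<in> I})"
    by (rule sum.subset_diff[OF \<open>S \<subseteq> P\<close> FR(1), symmetric])
  moreover have "\<dots> = (\<Sum>b\<in>U. card {p\<in>P. (p, b) \<in> I})"
    by (rule sum_card_filter_swap[OF FR(1) finU])
  moreover have "(\<Sum>b\<in>U. card {p\<in>P. (p, b) \<in> I}) = \<alpha> * card U"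
    using FR(6) incident_blocks_subset[of B I S] unfolding U_def by (simp add: subset_iff)
  ultimately show ?thesis
    by simp
qed

lemma FR_code_card_incident_blocks_insert:
  fixes S :: "'p set"
  assumes FR: "FR_code n \<alpha> v \<rho> P B I" and "p \<in> P"
  defines "U \<equiv> incident_blocks B I S"
  shows "card (incident_blocks B I (insert p S)) + card {b\<in>U. (p, b) \<in> I} = card U + \<rho>"
proof -
  note FR = FR_codeD[OF FR]
  have "incident_blocks B I (insert p S) = U \<union> {b\<in>B. (p, b) \<in> I}"
    and "U \<inter> {b\<in>B. (p, b) \<in> I} = {b\<in>U. (p, b) \<in> I}"
    unfolding U_def incident_blocks_def by auto
  moreover have "finite U" "finite {b\<in>B. (p, b) \<in> I}"
    using finite_subset[OF incident_blocks_subset FR(2)] FR(2) unfolding U_def by auto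
  ultimately show ?thesis
    using FR(5)[OF \<open>p \<in> P\<close>] card_Un_Int[of U "{b\<in>B. (p, b) \<in> I}"] by simp
qed

lemma FR_code_incident_blocks_eq_blocks:
  assumes FR: "FR_code n \<alpha> v \<rho> P B I" and "S \<subseteq> P" "v - card S < \<alpha>"
  shows "incident_blocks B I S = B"
proof -
  note FR = FR_codeD[OF FR]
  have "b \<in> incident_blocks B I S" if "b \<in> B" for b
  proof (rule ccontr)
    assume "b \<notin> incident_blocks B I S"
    then have "{p\<in>P. (p, b) \<in> I} \<subseteq> P - S"
      using \<open>b \<in> B\<close> unfolding incident_blocks_def by auto
    then have "card {p\<in>P. (p, b) \<in> I} \<le> card (P - S)"
      by (rule card_mono[OF finite_Diff[OF FR(1)]])
    then have "\<alpha> \<le> card (P - S)"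
      using FR(6)[OF \<open>b \<in> B\<close>] by simp
    moreover have "card (P - S) = v - card S"
      using card_Diff_subset[OF finite_subset[OF assms(2) FR(1)] assms(2)] FR(4) by simp
    ultimately show False
      using assms(3) by simp
  qed
  then show ?thesis
    using incident_blocks_subset[of B I S] by blast
qed

definition gprime_step :: "nat \<Rightarrow> nat \<Rightarrow> nat \<Rightarrow> nat \<Rightarrow> int \<Rightarrow> int" where
  "gprime_step \<alpha> v \<rho> l y =
     y + int \<rho> - \<lceil>(real \<alpha> * real_of_int y - real l * real \<rho>) / (real v - real l)\<rceil>"

lemma gprime_Suc:
  assumes "1 \<le> l"
  shows "gprime \<alpha> v \<rho> (Suc l) = gprime_step \<alpha> v \<rho> l (gprime \<alpha> v \<rho> l)"
  using assms by (cases l) (simp_all add: gprime_step_def)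

lemma gprime_step_mono:
  assumes "\<alpha> \<le> v - l" "l < v" "y \<le> z"
  shows "gprime_step \<alpha> v \<rho> l y \<le> gprime_step \<alpha> v \<rho> l z"
proof -
  have "real \<alpha> \<le> real v - real l"
    using assms(1,2) by linarith
  then show ?thesis
    using ceiling_divide_increment_le[of "real \<alpha>" "real v - real l" y z "real l * real \<rho>"] assms(3)
    unfolding gprime_step_def by linarith
qed

lemma gprime_step_fixpoint:
  assumes "\<alpha> * n = v * \<rho>" "l < v"
  shows "gprime_step \<alpha> v \<rho> l (int n) = int n"
proof -
  have "real \<alpha> * real n - real l * real \<rho> = real \<rho> * (real v - real l)"
    using arg_cong[OF assms(1), of real] by (simp add: algebra_simps)
  then show ?thesis
    using assms(2) unfolding gprime_step_def by simp
qed

lemma FR_code_greedy_extension: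
  assumes FR: "FR_code n \<alpha> v \<rho> P B I" and "S \<subseteq> P" "card S < v"
  shows "\<exists>p\<in>P - S. int (card (incident_blocks B I (insert p S)))
           \<le> gprime_step \<alpha> v \<rho> (card S) (int (card (incident_blocks B I S)))"
proof -
  define U where "U = incident_blocks B I S"
  note FR' = FR_codeD[OF FR]
  have card_outside: "card (P - S) = v - card S"
    using card_Diff_subset[OF finite_subset[OF assms(2) FR'(1)] assms(2)] FR'(4) by simp
  then have "P - S \<noteq> {}"
    using assms(3) by (intro notI) simp
  then obtain p where p: "p \<in> P - S"
    and avg: "\<lceil>real (\<Sum>x\<in>P - S. card {b\<in>U. (x, b) \<in> I}) / real (card (P - S))\<rceil>
                \<le> int (card {b\<in>U. (p, b) \<in> I})"
    using exists_ceiling_average_le[of "P - S" "\<lambda>x. card {b\<in>U. (x, b) \<in> I}"] FR'(1) by blast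
  have "real (\<Sum>x\<in>P - S. card {b\<in>U. (x, b) \<in> I}) = real \<alpha> * real (card U) - real (card S) * real \<rho>"
    using arg_cong[OF FR_code_count_incidences_incident_blocks[OF FR assms(2)], of real]
    unfolding U_def by simp
  moreover have "real (card (P - S)) = real v - real (card S)"
    using card_outside assms(3) by simp
  ultimately have "int (card (incident_blocks B I (insert p S)))
      + \<lceil>(real \<alpha> * real (card U) - real (card S) * real \<rho>) / (real v - real (card S))\<rceil>
      \<le> int (card U) + int \<rho>"
    using avg FR_code_card_incident_blocks_insert[OF FR, of p S] p unfolding U_def by simp
  then have "int (card (incident_blocks B I (insert p S)))
      \<le> gprime_step \<alpha> v \<rho> (card S) (int (card (incident_blocks B I S)))"
    unfolding gprime_step_def U_def by simp
  with p show ?thesis ..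
qed

lemma FR_code_gprime_step_le:
  assumes FR: "FR_code n \<alpha> v \<rho> P B I" and "S \<subseteq> P" "card S < v"
    and "int (card (incident_blocks B I S)) \<le> y" "y \<le> int n"
  shows "gprime_step \<alpha> v \<rho> (card S) (int (card (incident_blocks B I S)))
           \<le> gprime_step \<alpha> v \<rho> (card S) y \<and> gprime_step \<alpha> v \<rho> (card S) y \<le> int n"
proof -
  have fixpoint: "gprime_step \<alpha> v \<rho> (card S) (int n) = int n"
    using gprime_step_fixpoint[OF FR_code_count_incidences[OF FR] assms(3)] .
  \<comment> \<open>\<open>gprime_step\<close> is monotone only for \<open>\<alpha> \<le> v - |S|\<close>; otherwise every block is already met.\<close>
  consider "\<alpha> \<le> v - card S" | "int (card (incident_blocks B I S)) = int n"
    using FR_code_incident_blocks_eq_blocks[OF FR assms(2)] FR_codeD(3)[OF FR] by fastforce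
  then show ?thesis
  proof cases
    case 1
    then show ?thesis
      using gprime_step_mono[OF 1 assms(3) assms(4), of \<rho>]
        gprime_step_mono[OF 1 assms(3) assms(5), of \<rho>] fixpoint by simp
  next
    case 2
    then show ?thesis
      using assms(4,5) fixpoint by simp
  qed
qed

lemma FR_code_exists_subset_incident_blocks_le_gprime:
  assumes FR: "FR_code n \<alpha> v \<rho> P B I" and "1 \<le> m" "m \<le> v"
  shows "\<exists>S\<subseteq>P. card S = m \<and> int (card (incident_blocks B I S)) \<le> gprime \<alpha> v \<rho> m
           \<and> gprime \<alpha> v \<rho> m \<le> int n"
  using assms(2,3)
proof (induction m rule: nat_induct_at_least)
  case base
  note FR' = FR_codeD[OF FR]
  obtain p where "p \<in> P"
    using base FR'(4) by fastforce
  moreover have "incident_blocks B I {p} = {b\<in>B. (p, b) \<in> I}"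
    unfolding incident_blocks_def by auto
  moreover have "card {b\<in>B. (p, b) \<in> I} \<le> n"
    using card_mono[OF FR'(2), of "{b\<in>B. (p, b) \<in> I}"] FR'(3) by auto
  ultimately show ?case
    using FR'(5) by (intro exI[of _ "{p}"]) auto
next
  case (Suc l)
  then obtain S where S: "S \<subseteq> P" "card S = l" "int (card (incident_blocks B I S)) \<le> gprime \<alpha> v \<rho> l"
    "gprime \<alpha> v \<rho> l \<le> int n"
    by auto
  obtain p where p: "p \<in> P - S" "int (card (incident_blocks B I (insert p S)))
      \<le> gprime_step \<alpha> v \<rho> l (int (card (incident_blocks B I S)))"
    using FR_code_greedy_extension[OF FR S(1)] S(2) Suc.prems by auto
  moreover have "card (insert p S) = Suc l"
    using p(1) S(2) finite_subset[OF S(1) FR_codeD(1)[OF FR]] by simp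
  ultimately show ?case
    using FR_code_gprime_step_le[OF FR S(1) _ S(3,4)] S(1,2) Suc.prems gprime_Suc[OF Suc.hyps]
    by (intro exI[of _ "insert p S"]) auto
qed

lemma file_size_le_card_diff:
  assumes "incidence_structure P B I" "S \<subseteq> P" "k + card (incident_blocks B I S) \<le> card B"
  shows "file_size P B I k \<le> card P - card S"
proof -
  have fin: "finite P" "finite B"
    using assms(1) unfolding incidence_structure_def by auto
  have "k \<le> card (B - incident_blocks B I S)"
    using assms(3) card_Diff_subset[OF finite_subset[OF _ fin(2)], of "incident_blocks B I S"]
      incident_blocks_subset[of B I S] by simp
  then obtain K where K: "K \<subseteq> B - incident_blocks B I S" "card K = k"
    by (meson obtain_subset_with_card_n)
  then have "covered P I K \<subseteq> P - S"
    unfolding covered_def incident_blocks_def by auto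
  then have "card (covered P I K) \<le> card (P - S)"
    by (rule card_mono[OF finite_Diff[OF fin(1)]])
  also have "\<dots> = card P - card S"
    by (rule card_Diff_subset[OF finite_subset[OF assms(2) fin(1)] assms(2)])
  finally have "card (covered P I K) \<le> card P - card S" .
  moreover have "file_size P B I k \<le> card (covered P I K)"
  proof (unfold file_size_def, rule Min_le)
    have "{K. K \<subseteq> B \<and> card K = k} \<subseteq> Pow B"
      by auto
    then show "finite ((\<lambda>K. card (covered P I K)) ` {K. K \<subseteq> B \<and> card K = k})"
      using fin(2) by (meson finite_Pow_iff finite_imageI finite_subset)
  qed (use K in auto)
  ultimately show ?thesis
    by linarith
qed

theorem theorem3:
  fixes P :: "'p set" and B :: "'b set" and I :: "('p \<times> 'b) set"
    and n \<alpha> v \<rho> k :: nat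
  assumes "FR_code n \<alpha> v \<rho> P B I"
    and "1 \<le> k" and "k \<le> n"
  shows "file_size P B I k \<le>
    (\<Sum>i=1..v. if int k > int n - gprime \<alpha> v \<rho> i then 1 else 0)"
proof -
  define A where "A = {l. l \<le> v \<and> (\<exists>S\<subseteq>P. card S = l \<and> k + card (incident_blocks B I S) \<le> n)}"
  define m where "m = Max A"
  have "finite A" "0 \<in> A"
    using assms(3) unfolding A_def incident_blocks_def by auto
  then have "m \<in> A" and m_max: "\<And>l. l \<in> A \<Longrightarrow> l \<le> m"
    unfolding m_def by (auto intro: Max_in)
  then obtain S where "S \<subseteq> P" "card S = m" "k + card (incident_blocks B I S) \<le> n"
    unfolding A_def by auto
  then have "file_size P B I k \<le> v - m"
    using file_size_le_card_diff[of P B I S k] assms(1) unfolding FR_code_def by simp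
  also have "v - m = card {m<..v}"
    by simp
  also have "\<dots> \<le> card ({1..v} \<inter> {i. int k > int n - gprime \<alpha> v \<rho> i})"
  proof (rule card_mono)
    show "{m<..v} \<subseteq> {1..v} \<inter> {i. int k > int n - gprime \<alpha> v \<rho> i}"
    proof
      fix i assume i: "i \<in> {m<..v}"
      then obtain T where "T \<subseteq> P" "card T = i" "int (card (incident_blocks B I T)) \<le> gprime \<alpha> v \<rho> i"
        using FR_code_exists_subset_incident_blocks_le_gprime[OF assms(1), of i] by auto
      with i m_max[of i] show "i \<in> {1..v} \<inter> {i. int k > int n - gprime \<alpha> v \<rho> i}"
        unfolding A_def by force
    qed
  qed simp
  also have "\<dots> = (\<Sum>i=1..v. if int k > int n - gprime \<alpha> v \<rho> i then 1 else 0)"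
    by (simp flip: of_bool_def)
  finally show ?thesis .
qed

end
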